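(* For any complete chain $\mathbf{C}$, the pointed residuated lattice $\mathbf{Res}(\mathbf{C})=\langle \mathrm{Res}(\mathbf{C}),\wedge,\vee,\circ,\backslash,/,\mathrm{id},p\rangle$ is simple, i.e., its only congruences are the identity relation and the total relation.
   Context: Let $\mathbf{C}$ be a complete chain with least element $0$ and greatest element $\infty$. $\mathrm{Res}(\mathbf{C})$ is the set of maps $C\to C$ preserving arbitrary joins, with pointwise $\wedge,\vee$, composition $\circ$, identity map $\mathrm{id}$, residuals $f\backslash g=\bigvee\{h\mid f\circ h\le g\}$ and $g/f=\bigvee\{h\mid h\circ f\le g\}$, and the constant $p\colon x\mapsto\bigvee\{y\in C\mid y<x\}$. *)

theory Defs
  imports Main
begin

text \<open>A complete chain is modelled by a type of class complete_linorder
  (least element bot = 0, greatest element top = infinity).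
  Res(C): the join-preserving self-maps of C.\<close>

definition Res :: "('a::complete_linorder \<Rightarrow> 'a) set" where
  "Res = {f. \<forall>A. f (Sup A) = Sup (f ` A)}"

text \<open>Residuals: joins (in Res, which coincide with pointwise joins) of
  the relevant sets of maps in Res.\<close>

definition res_ldiv :: "('a::complete_linorder \<Rightarrow> 'a) \<Rightarrow> ('a \<Rightarrow> 'a) \<Rightarrow> ('a \<Rightarrow> 'a)" where
  "res_ldiv f g = Sup {h \<in> Res. f \<circ> h \<le> g}"

definition res_rdiv :: "('a::complete_linorder \<Rightarrow> 'a) \<Rightarrow> ('a \<Rightarrow> 'a) \<Rightarrow> ('a \<Rightarrow> 'a)" where
  "res_rdiv g f = Sup {h \<in> Res. h \<circ> f \<le> g}"

definition res_p :: "'a::complete_linorder \<Rightarrow> 'a" where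
  "res_p x = Sup {y. y < x}"

text \<open>Congruence of the pointed residuated lattice
  (Res, inf, sup, comp, ldiv, rdiv, id, p): an equivalence relation on Res
  compatible with all operations (the constants id and p impose no condition).\<close>

definition res_congruence :: "(('a::complete_linorder \<Rightarrow> 'a) \<times> ('a \<Rightarrow> 'a)) set \<Rightarrow> bool" where
  "res_congruence \<theta> \<longleftrightarrow>
     equiv Res \<theta> \<and>
     (\<forall>f g f' g'. (f, f') \<in> \<theta> \<longrightarrow> (g, g') \<in> \<theta> \<longrightarrow>
        (inf f g, inf f' g') \<in> \<theta> \<and>
        (sup f g, sup f' g') \<in> \<theta> \<and>
        (f \<circ> g, f' \<circ> g') \<in> \<theta> \<and>
        (res_ldiv f g, res_ldiv f' g') \<in> \<theta> \<and>
        (res_rdiv f g, res_rdiv f' g') \<in> \<theta>)"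

end

theory Submission
  imports Defs
begin

text \<open>If a congruence identifies two different maps f, g, say f x < g x, then composing
  with two-valued maps on both sides turns the pair into the constant 0 and the map e that
  sends every nonzero element to \<infinity>. Since e is the identity for meets with maps fixing 0,
  meeting 0 \<equiv> e with any h \<in> Res gives 0 \<equiv> h, so all of Res collapses.\<close>

definition step_map :: "'a::complete_linorder \<Rightarrow> 'a \<Rightarrow> 'a \<Rightarrow> 'a" where
  "step_map u v = (\<lambda>x. if x \<le> u then bot else v)"

lemma step_map_in_Res: "step_map u v \<in> Res"
proof -
  have "step_map u v (Sup A) = Sup (step_map u v ` A)" for A
  proof (cases "\<forall>a\<in>A. a \<le> u")
    case True
    then have "Sup A \<le> u" by (simp add: Sup_le_iff)
    moreover have "step_map u v ` A \<subseteq> {bot}" using True by (auto simp: step_map_def)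
    ultimately show ?thesis by (auto simp: step_map_def intro!: antisym Sup_least)
  next
    case False
    then obtain a where a: "a \<in> A" "\<not> a \<le> u" by blast
    then have "\<not> Sup A \<le> u" by (meson Sup_upper order_trans)
    moreover have "Sup (step_map u v ` A) = v"
    proof (rule antisym)
      show "Sup (step_map u v ` A) \<le> v" by (rule Sup_least) (auto simp: step_map_def)
      have "step_map u v a = v" using a by (simp add: step_map_def)
      then show "v \<le> Sup (step_map u v ` A)" using a by (metis Sup_upper imageI)
    qed
    ultimately show ?thesis by (simp add: step_map_def)
  qed
  then show ?thesis by (simp add: Res_def)
qed

lemma Res_bot: "f \<in> Res \<Longrightarrow> f bot = bot"
  unfolding Res_def by (metis (mono_tags, lifting) Sup_empty image_empty mem_Collect_eq)

lemma comp_step_map_sandwich: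
  assumes "f bot = bot"
  shows "step_map u top \<circ> f \<circ> step_map bot x =
         (if f x \<le> u then bot else step_map bot top)"
  using assms by (auto simp: step_map_def fun_eq_iff)

lemma inf_step_map_bot_top:
  assumes "f bot = bot"
  shows "inf f (step_map bot top) = f"
  using assms by (auto simp: fun_eq_iff step_map_def bot_unique)

lemma res_congruence_equiv: "res_congruence \<theta> \<Longrightarrow> equiv Res \<theta>"
  by (simp add: res_congruence_def)

lemma res_congruence_comp:
  "res_congruence \<theta> \<Longrightarrow> (f, f') \<in> \<theta> \<Longrightarrow> (g, g') \<in> \<theta> \<Longrightarrow> (f \<circ> g, f' \<circ> g') \<in> \<theta>"
  by (simp add: res_congruence_def)

lemma res_congruence_inf:
  "res_congruence \<theta> \<Longrightarrow> (f, f') \<in> \<theta> \<Longrightarrow> (g, g') \<in> \<theta> \<Longrightarrow> (inf f g, inf f' g') \<in> \<theta>"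
  by (simp add: res_congruence_def)

lemma res_congruence_refl: "res_congruence \<theta> \<Longrightarrow> f \<in> Res \<Longrightarrow> (f, f) \<in> \<theta>"
  using res_congruence_equiv by (metis equiv_def refl_onD)

lemma res_congruence_bot_step_map:
  assumes \<theta>: "res_congruence \<theta>" and fg: "(f, g) \<in> \<theta>" and less: "f x < g x"
  shows "(bot, step_map bot top) \<in> \<theta>"
proof -
  have "f \<in> Res" "g \<in> Res"
    using fg res_congruence_equiv[OF \<theta>] by (auto simp: equiv_def refl_on_def)
  then have f0: "f bot = bot" and g0: "g bot = bot" by (simp_all add: Res_bot)
  let ?k = "step_map (f x) top" and ?j = "step_map bot x"
  have "(?k \<circ> f \<circ> ?j, ?k \<circ> g \<circ> ?j) \<in> \<theta>"
    using \<theta> fg by (intro res_congruence_comp res_congruence_refl step_map_in_Res)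
  moreover have "?k \<circ> f \<circ> ?j = bot"
    using comp_step_map_sandwich[of f] f0 by simp
  moreover have "?k \<circ> g \<circ> ?j = step_map bot top"
    using comp_step_map_sandwich[of g "f x" x] g0 less leD by auto
  ultimately show ?thesis by simp
qed

lemma res_congruence_total_if_bot_step_map:
  assumes \<theta>: "res_congruence \<theta>" and e: "(bot, step_map bot top) \<in> \<theta>"
  shows "\<theta> = Res \<times> Res"
proof -
  have equiv: "equiv Res \<theta>" using \<theta> by (rule res_congruence_equiv)
  have bot_h: "(bot, h) \<in> \<theta>" if "h \<in> Res" for h
  proof -
    have "(inf h bot, inf h (step_map bot top)) \<in> \<theta>"
      using \<theta> e that by (intro res_congruence_inf res_congruence_refl)
    then show ?thesis using inf_step_map_bot_top[of h] Res_bot[OF that] by simp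
  qed
  have "(a, b) \<in> \<theta>" if "a \<in> Res" "b \<in> Res" for a b
    using bot_h[OF that(1)] bot_h[OF that(2)] equiv
    by (meson equiv_def symD transD)
  then have "Res \<times> Res \<subseteq> \<theta>" by blast
  moreover have "\<theta> \<subseteq> Res \<times> Res" using equiv by (simp add: equiv_def refl_on_def)
  ultimately show ?thesis by blast
qed

theorem proposition2p2:
  fixes \<theta> :: "(('a::complete_linorder \<Rightarrow> 'a) \<times> ('a \<Rightarrow> 'a)) set"
  assumes "res_congruence \<theta>"
  shows "\<theta> = Id_on Res \<or> \<theta> = Res \<times> Res"
proof (cases "\<theta> \<subseteq> Id")
  case True
  then show ?thesis
    using res_congruence_equiv[OF assms] by (auto simp: equiv_def refl_on_def Id_on_def)
next
  case False
  then obtain f g x where fg: "(f, g) \<in> \<theta>" "f x \<noteq> g x" by (auto simp: fun_eq_iff)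
  have "(g, f) \<in> \<theta>"
    using fg res_congruence_equiv[OF assms] by (auto simp: equiv_def dest: symD)
  then have "(bot, step_map bot top) \<in> \<theta>"
    using fg assms res_congruence_bot_step_map by (metis linorder_neqE)
  then show ?thesis using assms res_congruence_total_if_bot_step_map by blast
qed

end
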